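(* Let $0<\alpha\le\beta$ with $\alpha\le1$, and let $\gamma:[0,1]\to\mathbb{R}^n$ be an $(\alpha,\beta)$-bi-Hölder curve with constant $1\le C_\gamma<\infty$. Then there exist $C=C(\alpha,\beta,C_\gamma,n)>0$ and $r_0=r_0(\beta,C_\gamma)>0$ such that for all $0<r<r_0$, $$\frac1C\, r^{\frac{\beta-1}{\beta}}\le \widehat\Lambda(B(\widehat\gamma,r),r)\le C\, r^{\frac{\alpha-1}{\alpha}}.$$
   Context: A map $\gamma:[0,1]\to\mathbb{R}^n$ is an $(\alpha,\beta)$-bi-Hölder curve with constant $C_\gamma\ge1$ if $\frac1{C_\gamma}|x-y|^\beta\le|\gamma(x)-\gamma(y)|\le C_\gamma|x-y|^\alpha$ for all $x,y\in[0,1]$. $\widehat\gamma:=\gamma([0,1])$. For $A\subset\mathbb{R}^n$, $B(A,r):=\{x:\mathrm{dist}(x,A)\le r\}$. The length of a curve $\sigma:[0,1]\to\mathbb{R}^n$ is $\ell(\sigma):=\sup\sum_{k=1}^N|\sigma(t_k)-\sigma(t_{k-1})|$, the supremum over all partitions $0=t_0<\dots<t_N=1$. For a compact $E$, $\widehat\Lambda(E,r):=\inf\{\ell(\sigma):\sigma:[0,1]\to\mathbb{R}^n \text{ Lipschitz with } B(\sigma([0,1]),r)\supset E\}$. *)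

theory Defs
  imports "HOL-Analysis.Analysis"
begin

definition bi_holder :: "real \<Rightarrow> real \<Rightarrow> real \<Rightarrow> (real \<Rightarrow> 'a::euclidean_space) \<Rightarrow> bool" where
  "bi_holder \<alpha> \<beta> C \<gamma> \<longleftrightarrow> C \<ge> 1 \<and>
     (\<forall>x\<in>{0..1}. \<forall>y\<in>{0..1}.
        (1 / C) * \<bar>x - y\<bar> powr \<beta> \<le> dist (\<gamma> x) (\<gamma> y) \<and>
        dist (\<gamma> x) (\<gamma> y) \<le> C * \<bar>x - y\<bar> powr \<alpha>)"

definition nbhd :: "'a::euclidean_space set \<Rightarrow> real \<Rightarrow> 'a set" where
  "nbhd A r = {x. infdist x A \<le> r}"

definition curve_length :: "(real \<Rightarrow> 'a::euclidean_space) \<Rightarrow> ereal" where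
  "curve_length \<sigma> = (SUP p \<in> {(N, t) | (N :: nat) (t :: nat \<Rightarrow> real).
                                   t 0 = 0 \<and> t N = 1 \<and> (\<forall>k<N. t k < t (Suc k))}.
       ereal (\<Sum>k<fst p. dist (\<sigma> (snd p (Suc k))) (\<sigma> (snd p k))))"

definition Lambda_hat :: "'a::euclidean_space set \<Rightarrow> real \<Rightarrow> ereal" where
  "Lambda_hat E r = (INF \<sigma> \<in> {\<sigma> :: real \<Rightarrow> 'a. (\<exists>L. L-lipschitz_on {0..1} \<sigma>)
                                   \<and> E \<subseteq> nbhd (\<sigma> ` {0..1}) r}. curve_length \<sigma>)"

end

theory Submission
  imports Defs
begin

text \<open>Upper bound: sample \<open>\<gamma>\<close> on a grid of mesh \<open>1/N\<close> with \<open>N \<approx> (C\<^sub>\<gamma>/r)\<^bsup>1/\<alpha>\<^esup>\<close>, so that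
  consecutive samples are \<open>r\<close>-close. A polygon through every sample shifted by \<open>r\<close> times the points
  of a fixed finite \<open>1\<close>-net of the ball of radius \<open>3\<close> has length \<open>O(N r)\<close>, and its
  \<open>r\<close>-neighbourhood contains \<open>B(\<gamma>([0,1]), r)\<close>.

  Lower bound: by the lower estimate in \<open>bi_holder\<close> the \<open>N + 1 \<approx> (4 C\<^sub>\<gamma> r)\<^bsup>-1/\<beta>\<^esup>\<close> grid samples are
  \<open>4r\<close>-separated. A curve whose \<open>r\<close>-neighbourhood covers them passes within \<open>3r/2\<close> of each, so it
  visits \<open>N + 1\<close> mutually \<open>r\<close>-separated points and has length at least \<open>(N - 2) r\<close>.\<close>

lemma infdist_lessE:
  fixes A :: "'a::metric_space set"
  assumes "infdist x A < d" "A \<noteq> {}"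
  obtains a where "a \<in> A" "dist x a < d"
proof -
  have "(INF a\<in>A. dist x a) < d" using assms by (simp add: infdist_notempty)
  then show ?thesis
    using assms(2) that by (subst (asm) cINF_less_iff) (auto intro: bdd_belowI[of _ 0])
qed

lemma curve_length_ge_inscribed:
  assumes "t 0 = 0" "t N = 1" "\<And>k. k < N \<Longrightarrow> t k < t (Suc k)"
  shows "ereal (\<Sum>k<N. dist (\<sigma> (t (Suc k))) (\<sigma> (t k))) \<le> curve_length \<sigma>"
  unfolding curve_length_def
  by (rule SUP_upper2[where i="(N,t)"]) (use assms in auto)

lemma curve_length_le_lipschitz:
  assumes "L-lipschitz_on {0..1} \<sigma>"
  shows "curve_length \<sigma> \<le> ereal L"
  unfolding curve_length_def
proof (rule SUP_least, clarsimp)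
  fix N and t :: "nat \<Rightarrow> real"
  assume t0: "t 0 = 0" and tN: "t N = 1" and st: "\<forall>k<N. t k < t (Suc k)"
  have mono: "t i \<le> t j" if "i \<le> j" "j \<le> N" for i j
    by (rule lift_Suc_mono_le_ivl[of "{..<N}"]) (use st that in \<open>auto intro: less_imp_le\<close>)
  have tin: "t k \<in> {0..1}" if "k \<le> N" for k
    using mono[of 0 k] mono[of k N] that t0 tN by auto
  have "(\<Sum>k<N. dist (\<sigma> (t (Suc k))) (\<sigma> (t k))) \<le> (\<Sum>k<N. L * (t (Suc k) - t k))"
  proof (rule sum_mono)
    fix k assume "k \<in> {..<N}"
    then have "dist (\<sigma> (t (Suc k))) (\<sigma> (t k)) \<le> L * dist (t (Suc k)) (t k)"
      using assms tin[of k] tin[of "Suc k"] unfolding lipschitz_on_def by auto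
    then show "dist (\<sigma> (t (Suc k))) (\<sigma> (t k)) \<le> L * (t (Suc k) - t k)"
      using st \<open>k \<in> {..<N}\<close> by (auto simp: dist_real_def)
  qed
  also have "\<dots> = L * (t N - t 0)"
    by (simp add: sum_distrib_left[symmetric] sum_lessThan_telescope)
  finally show "(\<Sum>k<N. dist (\<sigma> (t (Suc k))) (\<sigma> (t k))) \<le> L" using t0 tN by simp
qed

definition ramp :: "real \<Rightarrow> real" where
  "ramp x = max 0 (min 1 x)"

lemma sum_ramp: "(\<Sum>k<m. ramp (x - real k)) = max 0 (min (real m) x)"
  by (induction m) (auto simp: ramp_def)

lemma ramp_mono: "x \<le> y \<Longrightarrow> ramp x \<le> ramp y"
  by (auto simp: ramp_def)

text \<open>The segment from \<open>P k\<close> to \<open>P (k + 1)\<close> is traversed for \<open>t \<in> [k/m, (k+1)/m]\<close>, where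
  \<open>ramp (m t - k)\<close> rises from \<open>0\<close> to \<open>1\<close>.\<close>
definition polygonal_path :: "(nat \<Rightarrow> 'a::real_normed_vector) \<Rightarrow> nat \<Rightarrow> real \<Rightarrow> 'a" where
  "polygonal_path P m t = P 0 + (\<Sum>k<m. ramp (real m * t - real k) *\<^sub>R (P (Suc k) - P k))"

lemma polygonal_path_vertex:
  assumes "j \<le> m" "0 < m"
  shows "polygonal_path P m (real j / real m) = P j"
proof -
  have "(\<Sum>k<m. ramp (real m * (real j / real m) - real k) *\<^sub>R (P (Suc k) - P k))
      = (\<Sum>k\<in>{..<m} \<inter> {..<j}. P (Suc k) - P k)"
    using assms by (auto simp: ramp_def sum.inter_restrict intro!: sum.cong)
  also have "{..<m} \<inter> {..<j} = {..<j}" using assms by auto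
  finally show ?thesis by (simp add: polygonal_path_def sum_lessThan_telescope)
qed

lemma polygonal_path_lipschitz:
  assumes step: "\<And>k. norm (P (Suc k) - P k) \<le> D" and "0 \<le> D"
  shows "(real m * D)-lipschitz_on {0..1} (polygonal_path P m)"
proof -
  have "dist (polygonal_path P m t) (polygonal_path P m s) \<le> real m * D * (t - s)"
    if "s \<le> t" "s \<in> {0..1}" "t \<in> {0..1}" for s t
  proof -
    define w where "w k = ramp (real m * t - real k) - ramp (real m * s - real k)" for k
    have w: "0 \<le> w k" for k
      using ramp_mono \<open>s \<le> t\<close> by (simp add: w_def mult_left_mono)
    have "dist (polygonal_path P m t) (polygonal_path P m s)
        = norm (\<Sum>k<m. w k *\<^sub>R (P (Suc k) - P k))"
      by (simp add: polygonal_path_def w_def dist_norm sum_subtractf[symmetric] scaleR_diff_left)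
    also have "\<dots> \<le> (\<Sum>k<m. w k * D)"
      using w step by (intro order_trans[OF norm_sum] sum_mono) (simp add: mult_left_mono)
    also have "\<dots> = (real m * t - real m * s) * D"
      using that by (simp add: w_def sum_subtractf sum_ramp mult_left_le flip: sum_distrib_right)
    finally show ?thesis by (simp add: algebra_simps)
  qed
  then show ?thesis
    using assms unfolding lipschitz_on_def
    by (smt (verit) atLeastAtMost_iff dist_commute dist_real_def zero_le_mult_iff of_nat_0_le_iff)
qed

text \<open>The polygon whose vertex number \<open>i * length es + j\<close> is \<open>c i + r (es ! j)\<close>; consecutive
  vertices differ by at most \<open>r + 2 r R\<close>.\<close>
lemma lipschitz_path_through_translates:
  fixes c :: "nat \<Rightarrow> 'a::real_normed_vector" and es :: "'a list"
  assumes c_step: "\<And>i. dist (c (Suc i)) (c i) \<le> r"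
    and es_norm: "\<And>e. e \<in> set es \<Longrightarrow> norm e \<le> R" and "es \<noteq> []" "0 \<le> r"
  obtains \<sigma> :: "real \<Rightarrow> 'a" where "(real ((N + 1) * length es) * (r * (1 + 2 * R)))-lipschitz_on {0..1} \<sigma>"
    "\<And>i e. i \<le> N \<Longrightarrow> e \<in> set es \<Longrightarrow> c i + r *\<^sub>R e \<in> \<sigma> ` {0..1}"
proof -
  define M where "M = length es"
  have M0: "0 < M" using \<open>es \<noteq> []\<close> by (simp add: M_def)
  have es_nth: "norm (es ! (n mod M)) \<le> R" for n
    using es_norm M0 by (simp add: M_def)
  then have R0: "0 \<le> R" using norm_ge_zero order_trans by blast
  define P where "P n = c (n div M) + r *\<^sub>R es ! (n mod M)" for n
  define m where "m = (N + 1) * M"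
  have "norm (P (Suc k) - P k) \<le> r * (1 + 2 * R)" for k
  proof -
    have "Suc k div M = k div M \<or> Suc k div M = Suc (k div M)"
      using M0 by (metis div_Suc)
    then have "norm (c (Suc k div M) - c (k div M)) \<le> r"
      using c_step \<open>0 \<le> r\<close> by (auto simp: dist_norm)
    moreover have "norm (es ! (Suc k mod M) - es ! (k mod M)) \<le> 2 * R"
      using es_nth[of k] es_nth[of "Suc k"] norm_triangle_ineq4 by (smt (verit))
    ultimately have "norm (c (Suc k div M) - c (k div M)) + norm (r *\<^sub>R (es ! (Suc k mod M) - es ! (k mod M)))
        \<le> r * (1 + 2 * R)"
      using \<open>0 \<le> r\<close> by (simp add: distrib_left add_mono mult_left_mono)
    moreover have "P (Suc k) - P k = (c (Suc k div M) - c (k div M)) + r *\<^sub>R (es ! (Suc k mod M) - es ! (k mod M))"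
      by (simp add: P_def algebra_simps)
    ultimately show ?thesis
      using norm_triangle_ineq order_trans by metis
  qed
  then have "(real ((N + 1) * length es) * (r * (1 + 2 * R)))-lipschitz_on {0..1} (polygonal_path P m)"
    using polygonal_path_lipschitz[of P "r * (1 + 2 * R)" m] \<open>0 \<le> r\<close> R0 by (simp add: m_def M_def)
  moreover have "c i + r *\<^sub>R e \<in> polygonal_path P m ` {0..1}" if "i \<le> N" "e \<in> set es" for i e
  proof -
    obtain j where j: "j < M" "es ! j = e" using \<open>e \<in> set es\<close> by (auto simp: in_set_conv_nth M_def)
    define n where "n = i * M + j"
    have "n < (i + 1) * M" using j by (simp add: n_def)
    also have "\<dots> \<le> m" using \<open>i \<le> N\<close> by (simp add: m_def)
    finally have "n \<le> m" by simp
    moreover have "0 < m" using M0 by (simp add: m_def)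
    ultimately have "real n / real m \<in> {0..1}" and "polygonal_path P m (real n / real m) = P n"
      by (simp_all add: divide_le_eq_1 polygonal_path_vertex)
    moreover have "P n = c i + r *\<^sub>R e" using j by (simp add: P_def n_def)
    ultimately show ?thesis by (metis image_eqI)
  qed
  ultimately show ?thesis by (rule that)
qed

lemma nbhd_near_translates:
  fixes c :: "nat \<Rightarrow> 'a::euclidean_space"
  assumes "0 < r" "A \<noteq> {}" "y \<in> nbhd A r"
    and approx: "\<And>a. a \<in> A \<Longrightarrow> \<exists>i\<le>N. dist a (c i) \<le> r"
    and net: "cball 0 3 \<subseteq> (\<Union>e\<in>set es. cball e 1)"
  shows "\<exists>i\<le>N. \<exists>e\<in>set es. dist y (c i + r *\<^sub>R e) \<le> r"
proof -
  have "infdist y A < 2 * r" using assms by (simp add: nbhd_def)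
  then obtain a where "a \<in> A" "dist y a < 2 * r" using \<open>A \<noteq> {}\<close> by (rule infdist_lessE)
  moreover obtain i where "i \<le> N" "dist a (c i) \<le> r" using approx \<open>a \<in> A\<close> by blast
  ultimately have "norm (y - c i) \<le> 3 * r"
    using dist_triangle[of y "c i" a] by (simp add: dist_norm)
  then have "(1 / r) *\<^sub>R (y - c i) \<in> cball 0 3"
    using \<open>0 < r\<close> by (simp add: divide_le_eq)
  then obtain e where "e \<in> set es" "(1 / r) *\<^sub>R (y - c i) \<in> cball e 1"
    using net by blast
  moreover have "y - (c i + r *\<^sub>R e) = r *\<^sub>R ((1 / r) *\<^sub>R (y - c i) - e)"
    using \<open>0 < r\<close> by (simp add: algebra_simps)
  ultimately have "dist y (c i + r *\<^sub>R e) \<le> r"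
    using \<open>0 < r\<close> by (simp add: dist_norm norm_minus_commute)
  then show ?thesis using \<open>i \<le> N\<close> \<open>e \<in> set es\<close> by blast
qed

lemma finite_net_cball:
  fixes \<rho> \<epsilon> :: real
  assumes "0 \<le> \<rho>" "0 < \<epsilon>"
  obtains es :: "'a::euclidean_space list"
  where "es \<noteq> []" "set es \<subseteq> cball 0 \<rho>" "cball 0 \<rho> \<subseteq> (\<Union>e\<in>set es. cball e \<epsilon>)"
proof -
  have "\<forall>d>0. \<exists>K. finite K \<and> K \<subseteq> cball (0::'a) \<rho> \<and> cball 0 \<rho> \<subseteq> (\<Union>e\<in>K. ball e d)"
    by (rule seq_compact_imp_totally_bounded[OF compact_imp_seq_compact[OF compact_cball]])
  from this[rule_format, OF \<open>0 < \<epsilon>\<close>] obtain K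
    where K: "finite K" "K \<subseteq> cball (0::'a) \<rho>" "cball 0 \<rho> \<subseteq> (\<Union>e\<in>K. ball e \<epsilon>)"
    by blast
  obtain es where es: "set es = K" using finite_list[OF \<open>finite K\<close>] by blast
  have "(0::'a) \<in> cball 0 \<rho>" using \<open>0 \<le> \<rho>\<close> by simp
  then have "K \<noteq> {}" using K(3) by auto
  have "(\<Union>e\<in>K. ball e \<epsilon>) \<subseteq> (\<Union>e\<in>K. cball e \<epsilon>)" by (intro UN_mono) auto
  show ?thesis
  proof (rule that)
    show "es \<noteq> []" using \<open>K \<noteq> {}\<close> es by auto
    show "set es \<subseteq> cball 0 \<rho>" using K(2) es by simp
    show "cball 0 \<rho> \<subseteq> (\<Union>e\<in>set es. cball e \<epsilon>)"
      using K(3) \<open>(\<Union>e\<in>K. ball e \<epsilon>) \<subseteq> _\<close> es by simp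
  qed
qed

text \<open>Clamped at \<open>1\<close> beyond index \<open>N\<close>, so that \<open>\<gamma> \<circ> grid N\<close> has \<open>r\<close>-small steps for every index.\<close>
definition grid :: "nat \<Rightarrow> nat \<Rightarrow> real" where
  "grid N i = real (min i N) / real N"

lemma grid_in_unit_interval: "0 < N \<Longrightarrow> grid N i \<in> {0..1}"
  by (simp add: grid_def)

lemma grid_step: "0 < N \<Longrightarrow> \<bar>grid N (Suc i) - grid N i\<bar> \<le> 1 / real N"
  unfolding grid_def by (cases "i < N") (simp_all add: min_def flip: diff_divide_distrib)

lemma grid_nearest:
  assumes "0 < N" "t \<in> {0..1}"
  obtains i where "i \<le> N" "\<bar>t - grid N i\<bar> \<le> 1 / real N"
proof
  define i where "i = nat \<lfloor>t * real N\<rfloor>"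
  have i: "real i \<le> t * real N" "t * real N < real i + 1" using assms by (auto simp: i_def)
  moreover have "t * real N \<le> real N" using assms by (simp add: mult_left_le_one_le)
  ultimately show "i \<le> N" by linarith
  then have "t - grid N i = (t * real N - real i) / real N"
    using assms by (simp add: grid_def field_simps)
  then show "\<bar>t - grid N i\<bar> \<le> 1 / real N"
    using i assms by (simp add: divide_right_mono)
qed

lemma bi_holder_dist_le:
  fixes \<gamma> :: "real \<Rightarrow> 'a::euclidean_space"
  assumes bh: "bi_holder \<alpha> \<beta> Cg \<gamma>" and "0 < \<alpha>" "0 < r" "0 < N"
    and N: "(Cg / r) powr (1 / \<alpha>) \<le> real N"
    and uv: "u \<in> {0..1}" "v \<in> {0..1}" "\<bar>u - v\<bar> \<le> 1 / real N"
  shows "dist (\<gamma> u) (\<gamma> v) \<le> r"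
proof -
  have Cg: "1 \<le> Cg" using bh by (simp add: bi_holder_def)
  have "Cg / r = ((Cg / r) powr (1 / \<alpha>)) powr \<alpha>"
    using \<open>0 < \<alpha>\<close> Cg \<open>0 < r\<close> by (simp add: powr_powr)
  also have "\<dots> \<le> real N powr \<alpha>"
    using N \<open>0 < \<alpha>\<close> by (intro powr_mono2) auto
  finally have "Cg / real N powr \<alpha> \<le> r"
    using \<open>0 < r\<close> \<open>0 < N\<close> by (simp add: field_simps)
  have "dist (\<gamma> u) (\<gamma> v) \<le> Cg * \<bar>u - v\<bar> powr \<alpha>" using bh uv by (simp add: bi_holder_def)
  also have "\<dots> \<le> Cg * (1 / real N) powr \<alpha>"
    using uv \<open>0 < \<alpha>\<close> Cg by (intro mult_left_mono powr_mono2) auto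
  also have "\<dots> = Cg / real N powr \<alpha>" by (simp add: powr_divide)
  finally show ?thesis using \<open>Cg / real N powr \<alpha> \<le> r\<close> by linarith
qed

lemma bi_holder_grid_close:
  fixes \<gamma> :: "real \<Rightarrow> 'a::euclidean_space"
  assumes bh: "bi_holder \<alpha> \<beta> Cg \<gamma>" and "0 < \<alpha>" "0 < r" "0 < N"
    and N: "(Cg / r) powr (1 / \<alpha>) \<le> real N"
  shows "dist (\<gamma> (grid N (Suc i))) (\<gamma> (grid N i)) \<le> r"
    and "t \<in> {0..1} \<Longrightarrow> \<exists>i\<le>N. dist (\<gamma> t) (\<gamma> (grid N i)) \<le> r"
proof -
  note close = bi_holder_dist_le[OF assms]
  show "dist (\<gamma> (grid N (Suc i))) (\<gamma> (grid N i)) \<le> r"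
    using \<open>0 < N\<close> by (intro close grid_in_unit_interval grid_step)
  assume "t \<in> {0..1}"
  then obtain i where "i \<le> N" "\<bar>t - grid N i\<bar> \<le> 1 / real N"
    using grid_nearest[OF \<open>0 < N\<close>] by blast
  then show "\<exists>i\<le>N. dist (\<gamma> t) (\<gamma> (grid N i)) \<le> r"
    using close[OF \<open>t \<in> {0..1}\<close> grid_in_unit_interval[OF \<open>0 < N\<close>]] by blast
qed

lemma Lambda_hat_nbhd_le_net:
  fixes \<gamma> :: "real \<Rightarrow> 'a::euclidean_space" and es :: "'a list"
  assumes bh: "bi_holder \<alpha> \<beta> Cg \<gamma>" and "0 < \<alpha>" "0 < r" "r \<le> Cg"
    and es: "es \<noteq> []" "set es \<subseteq> cball 0 3" "cball 0 3 \<subseteq> (\<Union>e\<in>set es. cball e 1)"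
  shows "Lambda_hat (nbhd (\<gamma> ` {0..1}) r) r
    \<le> ereal (21 * real (length es) * Cg powr (1 / \<alpha>) * r powr ((\<alpha> - 1) / \<alpha>))"
proof -
  have Cg: "1 \<le> Cg" using bh by (simp add: bi_holder_def)
  define x where "x = (Cg / r) powr (1 / \<alpha>)"
  have x1: "1 \<le> x" unfolding x_def using assms by (intro ge_one_powr_ge_zero) auto
  define N where "N = nat \<lceil>x\<rceil>"
  have Nx: "x \<le> real N" "real N \<le> x + 1" using x1 by (auto simp: N_def)
  then have "0 < N" using x1 by simp
  note grid_close = bi_holder_grid_close[OF bh \<open>0 < \<alpha>\<close> \<open>0 < r\<close> \<open>0 < N\<close>, folded x_def, OF Nx(1)]
  define c where "c i = \<gamma> (grid N i)" for i
  have "dist (c (Suc i)) (c i) \<le> r" for i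
    unfolding c_def by (rule grid_close(1))
  moreover have "\<And>e. e \<in> set es \<Longrightarrow> norm e \<le> 3" using es(2) by auto
  ultimately obtain \<sigma> :: "real \<Rightarrow> 'a"
    where lip: "(real ((N + 1) * length es) * (r * (1 + 2 * 3)))-lipschitz_on {0..1} \<sigma>"
      and vertices: "\<And>i e. i \<le> N \<Longrightarrow> e \<in> set es \<Longrightarrow> c i + r *\<^sub>R e \<in> \<sigma> ` {0..1}"
    by (rule lipschitz_path_through_translates) (use es(1) \<open>0 < r\<close> in auto)
  have "nbhd (\<gamma> ` {0..1}) r \<subseteq> nbhd (\<sigma> ` {0..1}) r"
  proof
    fix y assume "y \<in> nbhd (\<gamma> ` {0..1}) r"
    moreover have "\<exists>i\<le>N. dist a (c i) \<le> r" if "a \<in> \<gamma> ` {0..1}" for a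
      using that grid_close(2) unfolding c_def by blast
    ultimately obtain i e where "i \<le> N" "e \<in> set es" "dist y (c i + r *\<^sub>R e) \<le> r"
      using nbhd_near_translates[of r "\<gamma> ` {0..1}" y N c es] \<open>0 < r\<close> es(3) by auto
    then show "y \<in> nbhd (\<sigma> ` {0..1}) r"
      using vertices infdist_le2[of "c i + r *\<^sub>R e" "\<sigma> ` {0..1}" y r] by (simp add: nbhd_def)
  qed
  then have "Lambda_hat (nbhd (\<gamma> ` {0..1}) r) r \<le> curve_length \<sigma>"
    unfolding Lambda_hat_def using lip by (intro INF_lower) auto
  also have "\<dots> \<le> ereal (real ((N + 1) * length es) * (r * (1 + 2 * 3)))"
    by (rule curve_length_le_lipschitz[OF lip])
  also have "real ((N + 1) * length es) * (r * (1 + 2 * 3)) \<le> 21 * real (length es) * (x * r)"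
  proof -
    have "(real N + 1) * (7 * r * real (length es)) \<le> (3 * x) * (7 * r * real (length es))"
      using Nx x1 \<open>0 < r\<close> by (intro mult_right_mono) auto
    then show ?thesis by (simp add: algebra_simps)
  qed
  also have "x * r = Cg powr (1 / \<alpha>) * r powr ((\<alpha> - 1) / \<alpha>)"
    using \<open>0 < r\<close> \<open>0 < \<alpha>\<close> Cg by (simp add: x_def powr_divide powr_diff diff_divide_distrib)
  finally show ?thesis by (simp add: mult.assoc)
qed

lemma sorted_list_of_set_nth_Min_Max:
  fixes U :: "'a::linorder set"
  assumes "finite U" "U \<noteq> {}"
  shows "sorted_list_of_set U ! 0 = Min U" "sorted_list_of_set U ! (card U - 1) = Max U"
proof -
  show "sorted_list_of_set U ! 0 = Min U" by (simp add: sorted_list_of_set_nonempty[OF assms])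
  define l where "l = sorted_list_of_set U"
  have len: "length l = card U" and "0 < card U" using assms by (simp_all add: l_def card_gt_0_iff)
  have "Max U \<in> set l" using assms by (simp add: l_def)
  then obtain j where "j < length l" "l ! j = Max U" by (auto simp: in_set_conv_nth)
  then have "Max U \<le> l ! (card U - 1)"
    using sorted_nth_mono[of l j "card U - 1"] len by (simp add: l_def)
  moreover have "l ! (card U - 1) \<le> Max U"
    using assms len \<open>0 < card U\<close> nth_mem[of "card U - 1" l] by (simp add: l_def)
  ultimately show "sorted_list_of_set U ! (card U - 1) = Max U" by (simp add: l_def)
qed

text \<open>Inscribe the polygon through \<open>T \<union> {0, 1}\<close>: all its edges except possibly the first
  and the last join two distinct points of \<open>T\<close>.\<close>
lemma curve_length_ge_separated:
  fixes \<sigma> :: "real \<Rightarrow> 'a::euclidean_space"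
  assumes "finite T" "T \<subseteq> {0..1}" "0 \<le> r"
    and sep: "\<And>s t. s \<in> T \<Longrightarrow> t \<in> T \<Longrightarrow> s \<noteq> t \<Longrightarrow> r \<le> dist (\<sigma> s) (\<sigma> t)"
  shows "ereal (real (card T - 3) * r) \<le> curve_length \<sigma>"
proof -
  define U where "U = T \<union> {0, 1}"
  define l where "l = sorted_list_of_set U"
  define m where "m = card U - 1"
  have "finite U" "U \<subseteq> {0..1}" "0 \<in> U" "1 \<in> U" using assms by (auto simp: U_def)
  then have U: "finite U" "U \<subseteq> {0..1}" "U \<noteq> {}" "Min U = 0" "Max U = 1"
    by (auto intro!: Min_eqI Max_eqI)
  have "card T \<le> card U" "card {0::real, 1} \<le> card U"
    using U(1) by (intro card_mono; auto simp: U_def)+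
  then have lm: "length l = Suc m" "card T - 3 \<le> m - 2" by (auto simp: l_def m_def)
  have l0: "l ! 0 = 0" and lm1: "l ! m = 1"
    using sorted_list_of_set_nth_Min_Max[of U] U by (simp_all add: l_def m_def)
  have strict: "l ! i < l ! j" if "i < j" "j \<le> m" for i j
    using sorted_wrt_nth_less[OF strict_sorted_list_of_set[of U]] that lm by (simp add: l_def)
  have inT: "l ! k \<in> T" if "0 < k" "k < m" for k
  proof -
    have "l ! k \<in> U" using U(1) lm that nth_mem[of k l] by (simp add: l_def)
    moreover have "l ! k \<noteq> 0" "l ! k \<noteq> 1" using strict[of 0 k] strict[of k m] that l0 lm1 by auto
    ultimately show ?thesis by (simp add: U_def)
  qed
  have "real (m - 2) * r = (\<Sum>k\<in>{1..<m - 1}. r)" by (simp add: numeral_2_eq_2)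
  also have "\<dots> \<le> (\<Sum>k\<in>{1..<m - 1}. dist (\<sigma> (l ! Suc k)) (\<sigma> (l ! k)))"
  proof (rule sum_mono)
    fix k assume "k \<in> {1..<m - 1}"
    then have "0 < k" "Suc k < m" by auto
    then show "r \<le> dist (\<sigma> (l ! Suc k)) (\<sigma> (l ! k))"
      using sep[of "l ! Suc k" "l ! k"] inT[of k] inT[of "Suc k"] strict[of k "Suc k"] by auto
  qed
  also have "\<dots> \<le> (\<Sum>k<m. dist (\<sigma> (l ! Suc k)) (\<sigma> (l ! k)))"
    by (rule sum_mono2) auto
  finally have "real (card T - 3) * r \<le> (\<Sum>k<m. dist (\<sigma> (l ! Suc k)) (\<sigma> (l ! k)))"
    using lm \<open>0 \<le> r\<close> by (smt (verit) mult_right_mono of_nat_le_iff)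
  also have "ereal \<dots> \<le> curve_length \<sigma>"
    by (rule curve_length_ge_inscribed) (use l0 lm1 strict in auto)
  finally show ?thesis by simp
qed

lemma curve_length_ge_separated_points:
  fixes \<sigma> :: "real \<Rightarrow> 'a::euclidean_space"
  assumes "finite Q" "Q \<subseteq> nbhd (\<sigma> ` {0..1}) r" "0 < r"
    and sep: "\<And>p q. p \<in> Q \<Longrightarrow> q \<in> Q \<Longrightarrow> p \<noteq> q \<Longrightarrow> 4 * r \<le> dist p q"
  shows "ereal (real (card Q - 3) * r) \<le> curve_length \<sigma>"
proof -
  have "\<forall>p\<in>Q. \<exists>t. t \<in> {0..1} \<and> dist p (\<sigma> t) < 3/2 * r"
  proof
    fix p assume "p \<in> Q"
    have "infdist p (\<sigma> ` {0..1}) < 3/2 * r" using assms \<open>p \<in> Q\<close> by (force simp: nbhd_def)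
    then obtain q where "q \<in> \<sigma> ` {0..1}" "dist p q < 3/2 * r" by (rule infdist_lessE) auto
    then show "\<exists>t. t \<in> {0..1} \<and> dist p (\<sigma> t) < 3/2 * r" by auto
  qed
  then obtain s where s: "\<forall>p\<in>Q. s p \<in> {0..1} \<and> dist p (\<sigma> (s p)) < 3/2 * r"
    by (rule bchoice[elim_format]) blast
  have far: "r \<le> dist (\<sigma> (s p)) (\<sigma> (s q))" if "p \<in> Q" "q \<in> Q" "p \<noteq> q" for p q
  proof -
    have "dist p q \<le> dist p (\<sigma> (s p)) + dist (\<sigma> (s p)) (\<sigma> (s q)) + dist q (\<sigma> (s q))"
      using dist_triangle[of p q "\<sigma> (s p)"] dist_triangle[of "\<sigma> (s p)" q "\<sigma> (s q)"]
      by (simp add: dist_commute)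
    moreover have "dist p (\<sigma> (s p)) < 3/2 * r" "dist q (\<sigma> (s q)) < 3/2 * r" using s that by auto
    ultimately show ?thesis using sep[OF that] by linarith
  qed
  have "inj_on s Q"
    using far \<open>0 < r\<close> by (force intro: inj_onI)
  then have "card (s ` Q) = card Q" by (rule card_image)
  moreover have "ereal (real (card (s ` Q) - 3) * r) \<le> curve_length \<sigma>"
    using s far \<open>finite Q\<close> \<open>0 < r\<close> by (intro curve_length_ge_separated) auto
  ultimately show ?thesis by simp
qed

lemma bi_holder_grid_separated:
  fixes \<gamma> :: "real \<Rightarrow> 'a::euclidean_space"
  assumes bh: "bi_holder \<alpha> \<beta> Cg \<gamma>" and "0 < \<beta>" "0 < N"
    and N: "4 * Cg * r * real N powr \<beta> \<le> 1" and ij: "i \<le> N" "j \<le> N" "i \<noteq> j"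
  shows "4 * r \<le> dist (\<gamma> (real i / real N)) (\<gamma> (real j / real N))"
proof -
  have Cg: "1 \<le> Cg" using bh by (simp add: bi_holder_def)
  have "1 \<le> \<bar>real i - real j\<bar>" using ij by (cases "i < j") auto
  then have mesh: "1 / real N \<le> \<bar>real i / real N - real j / real N\<bar>"
    using \<open>0 < N\<close> by (simp add: divide_right_mono flip: diff_divide_distrib)
  have "4 * r \<le> (1 / Cg) * (1 / real N) powr \<beta>"
    using N Cg \<open>0 < N\<close> by (simp add: powr_divide field_simps)
  also have "\<dots> \<le> (1 / Cg) * \<bar>real i / real N - real j / real N\<bar> powr \<beta>"
    using mesh \<open>0 < \<beta>\<close> Cg \<open>0 < N\<close> by (intro mult_left_mono powr_mono2) auto
  also have "\<dots> \<le> dist (\<gamma> (real i / real N)) (\<gamma> (real j / real N))"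
    using bh ij \<open>0 < N\<close> by (simp add: bi_holder_def)
  finally show ?thesis .
qed

text \<open>\<open>N = \<lfloor>(4 C r)\<^bsup>-1/\<beta>\<^esup>\<rfloor>\<close>; the smallness of \<open>r\<close> makes \<open>N \<ge> 6\<close>, so that \<open>N - 2\<close> is comparable
  to \<open>(4 C r)\<^bsup>-1/\<beta>\<^esup>\<close>.\<close>
lemma separated_grid_size:
  assumes "0 < \<beta>" "1 \<le> Cg" "0 < r" and small: "4 * Cg * r \<le> 6 powr (- \<beta>)"
  obtains N :: nat where "0 < N" "4 * Cg * r * real N powr \<beta> \<le> 1"
    "(4 * Cg) powr (-1 / \<beta>) / 2 * r powr ((\<beta> - 1) / \<beta>) \<le> real (N + 1 - 3) * r"
proof
  define x where "x = (4 * Cg * r) powr (-1 / \<beta>)"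
  have "(6 powr (- \<beta>)) powr (-1 / \<beta>) \<le> x"
    unfolding x_def using assms by (intro powr_mono2') auto
  then have x6: "6 \<le> x" using \<open>0 < \<beta>\<close> by (simp add: powr_powr)
  define N where "N = nat \<lfloor>x\<rfloor>"
  have Nx: "real N \<le> x" "x < real N + 1" using x6 by (auto simp: N_def)
  then show "0 < N" using x6 by simp
  have "real N powr \<beta> \<le> x powr \<beta>" using Nx \<open>0 < \<beta>\<close> by (intro powr_mono2) auto
  also have "x powr \<beta> = (4 * Cg * r) powr (-1 / \<beta> * \<beta>)" by (simp only: x_def powr_powr)
  also have "\<dots> = 1 / (4 * Cg * r)"
    using assms by (simp add: powr_minus_divide)
  finally show "4 * Cg * r * real N powr \<beta> \<le> 1"
    using assms by (simp add: field_simps)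
  have "(4 * Cg) powr (-1 / \<beta>) / 2 * r powr ((\<beta> - 1) / \<beta>) = x / 2 * r"
    using assms by (simp add: x_def powr_mult powr_diff powr_minus_divide diff_divide_distrib)
  also have "x / 2 * r \<le> real (N + 1 - 3) * r"
    using Nx x6 \<open>0 < r\<close> by (intro mult_right_mono) (auto simp: of_nat_diff)
  finally show "(4 * Cg) powr (-1 / \<beta>) / 2 * r powr ((\<beta> - 1) / \<beta>) \<le> real (N + 1 - 3) * r" .
qed

lemma Lambda_hat_nbhd_ge:
  fixes \<gamma> :: "real \<Rightarrow> 'a::euclidean_space"
  assumes bh: "bi_holder \<alpha> \<beta> Cg \<gamma>" and "0 < \<beta>" "0 < r" and small: "4 * Cg * r \<le> 6 powr (- \<beta>)"
  shows "ereal ((4 * Cg) powr (-1 / \<beta>) / 2 * r powr ((\<beta> - 1) / \<beta>))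
    \<le> Lambda_hat (nbhd (\<gamma> ` {0..1}) r) r"
  unfolding Lambda_hat_def
proof (rule INF_greatest, clarify)
  fix \<sigma> :: "real \<Rightarrow> 'a"
  assume cover: "nbhd (\<gamma> ` {0..1}) r \<subseteq> nbhd (\<sigma> ` {0..1}) r"
  have "1 \<le> Cg" using bh by (simp add: bi_holder_def)
  then obtain N where "0 < N" and N: "4 * Cg * r * real N powr \<beta> \<le> 1"
    and bound: "(4 * Cg) powr (-1 / \<beta>) / 2 * r powr ((\<beta> - 1) / \<beta>) \<le> real (N + 1 - 3) * r"
    using separated_grid_size[OF \<open>0 < \<beta>\<close> _ \<open>0 < r\<close> small] by blast
  define p where "p i = \<gamma> (real i / real N)" for i
  have sep: "4 * r \<le> dist (p i) (p j)" if "i \<le> N" "j \<le> N" "i \<noteq> j" for i j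
    unfolding p_def using bi_holder_grid_separated[OF bh \<open>0 < \<beta>\<close> \<open>0 < N\<close> N that] .
  then have "inj_on p {..N}" using \<open>0 < r\<close> by (force intro: inj_onI)
  then have "card (p ` {..N}) = N + 1" by (simp add: card_image)
  moreover have "p ` {..N} \<subseteq> nbhd (\<sigma> ` {0..1}) r"
    using cover \<open>0 < N\<close> \<open>0 < r\<close> by (force simp: p_def nbhd_def)
  ultimately have "ereal (real (N + 1 - 3) * r) \<le> curve_length \<sigma>"
    using curve_length_ge_separated_points[of "p ` {..N}" \<sigma> r] sep \<open>0 < r\<close> by force
  with bound show "ereal ((4 * Cg) powr (-1 / \<beta>) / 2 * r powr ((\<beta> - 1) / \<beta>)) \<le> curve_length \<sigma>"
    by (metis ereal_less_eq(3) order_trans)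
qed

lemma Lambda_hat_nbhd_upper_bound:
  assumes "0 < \<alpha>" "1 \<le> Cg"
  obtains A where "0 < A"
    "\<And>(\<gamma> :: real \<Rightarrow> 'a::euclidean_space) r. bi_holder \<alpha> \<beta> Cg \<gamma> \<Longrightarrow> 0 < r \<Longrightarrow> r \<le> Cg \<Longrightarrow>
       Lambda_hat (nbhd (\<gamma> ` {0..1}) r) r \<le> ereal (A * r powr ((\<alpha> - 1) / \<alpha>))"
proof -
  obtain es :: "'a list"
    where es: "es \<noteq> []" "set es \<subseteq> cball 0 3" "cball 0 3 \<subseteq> (\<Union>e\<in>set es. cball e 1)"
    by (rule finite_net_cball[of 3 1]) auto
  show ?thesis
  proof (rule that)
    show "0 < 21 * real (length es) * Cg powr (1 / \<alpha>)" using es(1) assms by simp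
  qed (use Lambda_hat_nbhd_le_net[OF _ \<open>0 < \<alpha>\<close> _ _ es] in auto)
qed

lemma Lambda_hat_nbhd_two_sided:
  assumes "0 < \<alpha>" "0 < \<beta>" "1 \<le> Cg"
  shows "\<exists>C>0. \<forall>\<gamma> :: real \<Rightarrow> 'a::euclidean_space. bi_holder \<alpha> \<beta> Cg \<gamma> \<longrightarrow>
    (\<forall>r. 0 < r \<and> 4 * Cg * r \<le> 6 powr (- \<beta>) \<longrightarrow>
       ereal ((1 / C) * r powr ((\<beta> - 1) / \<beta>)) \<le> Lambda_hat (nbhd (\<gamma> ` {0..1}) r) r \<and>
       Lambda_hat (nbhd (\<gamma> ` {0..1}) r) r \<le> ereal (C * r powr ((\<alpha> - 1) / \<alpha>)))"
proof -
  obtain A where "0 < A" and upper: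
    "\<And>(\<gamma> :: real \<Rightarrow> 'a) r. bi_holder \<alpha> \<beta> Cg \<gamma> \<Longrightarrow> 0 < r \<Longrightarrow> r \<le> Cg \<Longrightarrow>
       Lambda_hat (nbhd (\<gamma> ` {0..1}) r) r \<le> ereal (A * r powr ((\<alpha> - 1) / \<alpha>))"
    using Lambda_hat_nbhd_upper_bound[OF \<open>0 < \<alpha>\<close> \<open>1 \<le> Cg\<close>] by blast
  define B where "B = (4 * Cg) powr (-1 / \<beta>) / 2"
  let ?C = "max A (1 / B)"
  have "0 < B" using \<open>1 \<le> Cg\<close> by (simp add: B_def)
  then have "1 / ?C \<le> 1 / (1 / B)" by (intro divide_left_mono) (auto simp: less_max_iff_disj)
  then have C_B: "1 / ?C \<le> B" by simp
  have "6 powr (- \<beta>) \<le> 1" using \<open>0 < \<beta>\<close> by (simp add: powr_minus_divide ge_one_powr_ge_zero)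
  show ?thesis
  proof (intro exI[of _ ?C] conjI allI impI)
    show "0 < ?C" using \<open>0 < A\<close> by simp
    fix \<gamma> :: "real \<Rightarrow> 'a" and r
    assume bh: "bi_holder \<alpha> \<beta> Cg \<gamma>" and r: "0 < r \<and> 4 * Cg * r \<le> 6 powr (- \<beta>)"
    have "ereal (1 / ?C * r powr ((\<beta> - 1) / \<beta>)) \<le> ereal (B * r powr ((\<beta> - 1) / \<beta>))"
      using mult_right_mono[OF C_B, of "r powr ((\<beta> - 1) / \<beta>)"] by simp
    also have "\<dots> \<le> Lambda_hat (nbhd (\<gamma> ` {0..1}) r) r"
      using Lambda_hat_nbhd_ge[OF bh \<open>0 < \<beta>\<close>] r by (simp add: B_def)
    finally show "ereal (1 / ?C * r powr ((\<beta> - 1) / \<beta>)) \<le> Lambda_hat (nbhd (\<gamma> ` {0..1}) r) r" .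
    have "r \<le> 1 / (4 * Cg)" using r \<open>6 powr (- \<beta>) \<le> 1\<close> \<open>1 \<le> Cg\<close> by (simp add: field_simps)
    also have "\<dots> \<le> 1" using \<open>1 \<le> Cg\<close> by simp
    also have "\<dots> \<le> Cg" by (fact \<open>1 \<le> Cg\<close>)
    finally have "r \<le> Cg" .
    then have "Lambda_hat (nbhd (\<gamma> ` {0..1}) r) r \<le> ereal (A * r powr ((\<alpha> - 1) / \<alpha>))"
      using upper[OF bh] r by simp
    also have "\<dots> \<le> ereal (?C * r powr ((\<alpha> - 1) / \<alpha>))" by (simp add: mult_right_mono)
    finally show "Lambda_hat (nbhd (\<gamma> ` {0..1}) r) r \<le> ereal (?C * r powr ((\<alpha> - 1) / \<alpha>))" .
  qed
qed

theorem corollary3p8: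
  "\<forall>\<beta> C\<^sub>\<gamma>. \<exists>r0>0. \<forall>\<alpha>. 0 < \<alpha> \<and> \<alpha> \<le> \<beta> \<and> \<alpha> \<le> 1 \<and> 1 \<le> C\<^sub>\<gamma> \<longrightarrow>
     (\<exists>C>0. \<forall>\<gamma> :: real \<Rightarrow> 'a::euclidean_space. bi_holder \<alpha> \<beta> C\<^sub>\<gamma> \<gamma> \<longrightarrow>
        (\<forall>r. 0 < r \<and> r < r0 \<longrightarrow>
           ereal ((1 / C) * r powr ((\<beta> - 1) / \<beta>)) \<le> Lambda_hat (nbhd (\<gamma> ` {0..1}) r) r \<and>
           Lambda_hat (nbhd (\<gamma> ` {0..1}) r) r \<le> ereal (C * r powr ((\<alpha> - 1) / \<alpha>))))"
proof (intro allI)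
  fix \<beta> Cg :: real
  \<comment> \<open>\<open>max 1 Cg\<close> only keeps \<open>r0\<close> positive when \<open>Cg < 1\<close>, where there is nothing to prove.\<close>
  define r0 where "r0 = 6 powr (- \<beta>) / (4 * max 1 Cg)"
  have small: "4 * Cg * r \<le> 6 powr (- \<beta>)" if "1 \<le> Cg" "r < r0" for r
    using that by (simp add: r0_def field_simps)
  have "0 < r0" by (simp add: r0_def)
  moreover have "\<exists>C>0. \<forall>\<gamma> :: real \<Rightarrow> 'a. bi_holder \<alpha> \<beta> Cg \<gamma> \<longrightarrow>
        (\<forall>r. 0 < r \<and> r < r0 \<longrightarrow>
           ereal ((1 / C) * r powr ((\<beta> - 1) / \<beta>)) \<le> Lambda_hat (nbhd (\<gamma> ` {0..1}) r) r \<and>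
           Lambda_hat (nbhd (\<gamma> ` {0..1}) r) r \<le> ereal (C * r powr ((\<alpha> - 1) / \<alpha>)))"
    if "0 < \<alpha> \<and> \<alpha> \<le> \<beta> \<and> \<alpha> \<le> 1 \<and> 1 \<le> Cg" for \<alpha>
    using Lambda_hat_nbhd_two_sided[of \<alpha> \<beta> Cg, where 'a='a] small that by force
  ultimately show "\<exists>r0>0. \<forall>\<alpha>. 0 < \<alpha> \<and> \<alpha> \<le> \<beta> \<and> \<alpha> \<le> 1 \<and> 1 \<le> Cg \<longrightarrow>
     (\<exists>C>0. \<forall>\<gamma> :: real \<Rightarrow> 'a. bi_holder \<alpha> \<beta> Cg \<gamma> \<longrightarrow>
        (\<forall>r. 0 < r \<and> r < r0 \<longrightarrow>
           ereal ((1 / C) * r powr ((\<beta> - 1) / \<beta>)) \<le> Lambda_hat (nbhd (\<gamma> ` {0..1}) r) r \<and>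
           Lambda_hat (nbhd (\<gamma> ` {0..1}) r) r \<le> ereal (C * r powr ((\<alpha> - 1) / \<alpha>))))"
    by blast
qed

end
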